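(* Let $\mu=\alpha_-\delta_{-\infty}+\alpha_0\mu_0+\alpha_+\delta_{+\infty}\in\mathcal{P}(\overline{\mathbb{Z}})$ with $\alpha_\sigma\ge0$, $\alpha_-+\alpha_0+\alpha_+=1$, $\mu_0\in\mathcal{P}(\mathbb{Z})$, and let $\varepsilon>0$. If $R\in\mathbb{N}$ satisfies $R>R_{\mu_0}(\varepsilon)$, then for all $n\in\mathbb{N}$ and all $w\in\Omega^{(0)}_n(\mu,2^{-R}\varepsilon)$, $$|N^\sigma(w)-\alpha_\sigma n|<2\varepsilon n\quad\text{for }\sigma\in\{-,0,+\},\qquad N_m(w)<3\varepsilon n\quad\text{for }m\in\{-R,-R+1,R-1,R\}.$$
   Context: $\overline{\mathbb{Z}}=\mathbb{Z}\cup\{\pm\infty\}$ with metric $d(h,k)=|\varphi(h)-\varphi(k)|$, $\varphi(\pm\infty)=\pm1$, $\varphi(k)=1-2^{-k}$ ($k\ge0$), $\varphi(k)=-1+2^{-|k|}$ ($k<0$). For signed measures, $\|\nu\|=\sup\{\int f\,d\nu: f\text{ 1-Lipschitz for }d,\ \sup|f|\le1\}$; $B(\mu,\varepsilon)=\{\nu\in\mathcal{P}(\overline{\mathbb{Z}}):\|\nu-\mu\|<\varepsilon\}$. $\Omega^{(0)}_n$ is the set of words $w=(w_1,\dots,w_n)\in\mathbb{Z}^n$ with $w_1=0$ and $|w_i-w_{i+1}|=1$ for all $i$; $\ell(w)=\frac1n\sum_{j=1}^n\delta_{w_j}$; $\Omega^{(0)}_n(\mu,\varepsilon)=\{w\in\Omega^{(0)}_n:\ell(w)\in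 B(\mu,\varepsilon)\}$. For $R\in\mathbb{N}$: $A^-=\{k\in\overline{\mathbb{Z}}:k\le-R\}$, $A^0=\{-R+1,\dots,R-1\}$, $A^+=\{k\in\overline{\mathbb{Z}}:k\ge R\}$. $N^\sigma(w)=\#\{j\le n:w_j\in A^\sigma\}$ and $N_m(w)=\#\{j\le n:w_j=m\}$. $R_{\mu_0}(\varepsilon)=\min\{R\in\mathbb{N}:\mu_0(\{-R+1,\dots,R-1\})>1-\varepsilon\}$. *)

theory Defs
  imports "HOL-Probability.Probability"
begin

datatype zbar = NInf | Fin int | PInf

fun phi :: "zbar \<Rightarrow> real" where
  "phi NInf = -1"
| "phi PInf = 1"
| "phi (Fin k) = (if k \<ge> 0 then 1 - 2 powr (- real_of_int k)
                  else -1 + 2 powr (- real_of_int \<bar>k\<bar>))"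

definition zd :: "zbar \<Rightarrow> zbar \<Rightarrow> real" where
  "zd h k = \<bar>phi h - phi k\<bar>"

definition lip1 :: "(zbar \<Rightarrow> real) \<Rightarrow> bool" where
  "lip1 f \<longleftrightarrow> (\<forall>x. \<bar>f x\<bar> \<le> 1) \<and> (\<forall>h k. \<bar>f h - f k\<bar> \<le> zd h k)"

definition bl_dist :: "zbar pmf \<Rightarrow> zbar pmf \<Rightarrow> real" where
  "bl_dist \<nu> \<mu> = (SUP f \<in> {f. lip1 f}.
      measure_pmf.expectation \<nu> f - measure_pmf.expectation \<mu> f)"

definition ballP :: "zbar pmf \<Rightarrow> real \<Rightarrow> zbar pmf set" where
  "ballP \<mu> \<epsilon> = {\<nu>. bl_dist \<nu> \<mu> < \<epsilon>}"

text \<open>Words w = (w_1,...,w_n) are lists, w_j = w ! (j-1).\<close>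
definition Omega0 :: "nat \<Rightarrow> int list set" where
  "Omega0 n = {w. length w = n \<and> n \<ge> 1 \<and> w ! 0 = 0 \<and>
                  (\<forall>i. Suc i < n \<longrightarrow> \<bar>w ! i - w ! Suc i\<bar> = 1)}"

definition ell :: "int list \<Rightarrow> zbar pmf" where
  "ell w = map_pmf Fin (pmf_of_multiset (mset w))"

definition Omega0_ball :: "nat \<Rightarrow> zbar pmf \<Rightarrow> real \<Rightarrow> int list set" where
  "Omega0_ball n \<mu> \<epsilon> = {w \<in> Omega0 n. ell w \<in> ballP \<mu> \<epsilon>}"

definition Nminus :: "nat \<Rightarrow> int list \<Rightarrow> nat" where
  "Nminus R w = card {j. j < length w \<and> w ! j \<le> - int R}"

definition Nzero :: "nat \<Rightarrow> int list \<Rightarrow> nat" where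
  "Nzero R w = card {j. j < length w \<and> w ! j \<in> {- int R + 1 .. int R - 1}}"

definition Nplus :: "nat \<Rightarrow> int list \<Rightarrow> nat" where
  "Nplus R w = card {j. j < length w \<and> w ! j \<ge> int R}"

definition Nm :: "int \<Rightarrow> int list \<Rightarrow> nat" where
  "Nm m w = card {j. j < length w \<and> w ! j = m}"

definition R_mu0 :: "int pmf \<Rightarrow> real \<Rightarrow> nat" where
  "R_mu0 \<mu>0 \<epsilon> = (LEAST R::nat. measure_pmf.prob \<mu>0 {- int R + 1 .. int R - 1} > 1 - \<epsilon>)"

end

theory Submission
  imports Defs
begin

text \<open>
  If every point of \<open>S\<close> has distance at least \<open>c \<le> 1\<close> from every point outside \<open>S\<close>, then
  \<open>c\<close> times the indicator of \<open>S\<close> is an admissible test function, so \<open>c \<bar>\<nu> S - \<mu> S\<bar> \<le> \<parallel>\<nu> - \<mu>\<parallel>\<close>.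
  Since \<open>\<phi>\<close> is increasing, with increments at least \<open>2\<^sup>-\<^sup>M\<close> between neighbours of absolute
  value at most \<open>M\<close>, the sets \<open>A\<^sup>-\<close>, \<open>A\<^sup>0\<close>, \<open>A\<^sup>+\<close> are \<open>2\<^sup>-\<^sup>R\<close>-separated and the singletons \<open>{m}\<close>,
  \<open>\<bar>m\<bar> \<le> R\<close>, are \<open>2\<^sup>-\<^sup>R\<^sup>-\<^sup>1\<close>-separated. Hence the frequencies \<open>N\<^sup>\<sigma>(w)/n\<close> and \<open>N\<^sub>m(w)/n\<close> are within
  \<open>\<epsilon>\<close> resp. \<open>2\<epsilon>\<close> of \<open>\<mu>(A\<^sup>\<sigma>)\<close> resp. \<open>\<mu>{m}\<close>. Finally \<open>R > R\<^sub>\<mu>\<^sub>0(\<epsilon>)\<close> means that \<open>\<mu>\<^sub>0\<close> gives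
  mass below \<open>\<epsilon>\<close> to the complement of \<open>{-R+2, \<dots>, R-2}\<close>, so \<open>\<mu>(A\<^sup>\<sigma>)\<close> is within \<open>\<epsilon>\<close> of \<open>\<alpha>\<^sub>\<sigma>\<close>
  and \<open>\<mu>{m} < \<epsilon>\<close>.
\<close>

lemma phi_Fin_mono:
  assumes "j \<le> k" shows "phi (Fin j) \<le> phi (Fin k)"
proof (cases "0 \<le> j")
  case True
  then have "2 powr (- real_of_int k) \<le> 2 powr (- real_of_int j)"
    using assms by (intro powr_mono) simp_all
  then show ?thesis using True assms by simp
next
  case j_neg: False
  show ?thesis
  proof (cases "k < 0")
    case True
    then have "2 powr (- real_of_int \<bar>j\<bar>) \<le> 2 powr (- real_of_int \<bar>k\<bar>)"
      using assms j_neg by (intro powr_mono) simp_all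
    then show ?thesis using True j_neg by simp
  next
    case False
    have "2 powr (real_of_int j) \<le> 2 powr 0" using j_neg by (intro powr_mono) simp_all
    moreover have "2 powr (- real_of_int k) \<le> 2 powr 0" using False by (intro powr_mono) simp_all
    ultimately show ?thesis using j_neg False by simp
  qed
qed

lemma phi_bounds: "-1 \<le> phi x \<and> phi x \<le> 1"
proof (cases x)
  case (Fin k)
  have "2 powr t \<le> 2" if "t \<le> 1" for t :: real
    using powr_mono[OF that, of 2] by simp
  then show ?thesis using Fin by force
qed auto

lemma two_powr_neg_le_1: "2 powr (- real M) \<le> (1::real)"
  using powr_mono[of "- real M" 0 "2::real"] by simp

lemma phi_Fin_step_ge:
  assumes "\<bar>a\<bar> \<le> int M" "\<bar>a + 1\<bar> \<le> int M"
  shows "2 powr (- real M) \<le> phi (Fin (a + 1)) - phi (Fin a)"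
proof -
  have step: "phi (Fin (a + 1)) - phi (Fin a) = 2 powr (- real_of_int (max \<bar>a\<bar> \<bar>a + 1\<bar>))"
  proof (cases "0 \<le> a")
    case True
    then have "phi (Fin (a + 1)) - phi (Fin a) = 2 powr (- real_of_int a) - 2 powr (- real_of_int a - 1)"
      by simp
    also have "\<dots> = 2 powr (- real_of_int (a + 1))"
      by (simp add: powr_diff)
    finally show ?thesis using True by simp
  next
    case False
    then consider "a = -1" | "a \<le> -2" by linarith
    then show ?thesis
    proof cases
      case 2
      then have "phi (Fin (a + 1)) - phi (Fin a) = 2 powr (1 + real_of_int a) - 2 powr (real_of_int a)"
        by simp
      also have "\<dots> = 2 powr (real_of_int a)" by (simp add: powr_add)
      finally show ?thesis using 2 by simp
    qed simp
  qed
  show ?thesis unfolding step by (rule powr_mono) (use assms in auto)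
qed

definition zbar_atMost :: "int \<Rightarrow> zbar set" where
  "zbar_atMost a = insert NInf (Fin ` {..a})"

lemma in_zbar_atMost_iff [simp]:
  "NInf \<in> zbar_atMost a" "Fin k \<in> zbar_atMost a \<longleftrightarrow> k \<le> a" "PInf \<notin> zbar_atMost a"
  by (auto simp: zbar_atMost_def)

definition separated :: "real \<Rightarrow> zbar set \<Rightarrow> bool" where
  "separated c S \<longleftrightarrow> (\<forall>h \<in> S. \<forall>k. k \<notin> S \<longrightarrow> c \<le> zd h k)"

lemma separated_Compl: "separated c S \<Longrightarrow> separated c (- S)"
  unfolding separated_def by (metis ComplD ComplI zd_def abs_minus_commute)

lemma separated_Int: "separated c S \<Longrightarrow> separated c T \<Longrightarrow> separated c (S \<inter> T)"
  by (auto simp: separated_def)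

lemma phi_le_of_in_zbar_atMost: "h \<in> zbar_atMost a \<Longrightarrow> phi h \<le> phi (Fin a)"
  by (cases h) (auto intro: phi_Fin_mono simp: phi_bounds simp del: phi.simps(3))

lemma phi_ge_of_notin_zbar_atMost: "k \<notin> zbar_atMost a \<Longrightarrow> phi (Fin (a + 1)) \<le> phi k"
  by (cases k) (auto intro: phi_Fin_mono simp: phi_bounds simp del: phi.simps(3))

lemma separated_zbar_atMost:
  assumes "\<bar>a\<bar> \<le> int M" "\<bar>a + 1\<bar> \<le> int M"
  shows "separated (2 powr (- real M)) (zbar_atMost a)"
  unfolding separated_def zd_def
proof (intro ballI allI impI)
  fix h k assume "h \<in> zbar_atMost a" "k \<notin> zbar_atMost a"
  then show "2 powr (- real M) \<le> \<bar>phi h - phi k\<bar>"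
    using phi_le_of_in_zbar_atMost[of h a] phi_ge_of_notin_zbar_atMost[of k a] phi_Fin_step_ge[OF assms]
    by linarith
qed

lemma separated_singleton:
  assumes "\<bar>m - 1\<bar> \<le> int M" "\<bar>m\<bar> \<le> int M" "\<bar>m + 1\<bar> \<le> int M"
  shows "separated (2 powr (- real M)) {Fin m}"
proof -
  have "{Fin m} = zbar_atMost m \<inter> - zbar_atMost (m - 1)"
    by (auto simp: zbar_atMost_def)
  moreover have "separated (2 powr (- real M)) (zbar_atMost (m - 1))"
    using assms(1,2) by (intro separated_zbar_atMost) simp_all
  ultimately show ?thesis
    using separated_zbar_atMost[OF assms(2,3)] by (simp add: separated_Int separated_Compl)
qed

lemma abs_expectation_le_1:
  fixes p :: "'a pmf" and f :: "'a \<Rightarrow> real"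
  assumes "\<And>x. \<bar>f x\<bar> \<le> 1"
  shows "\<bar>measure_pmf.expectation p f\<bar> \<le> 1"
proof -
  have "integrable p f"
    using assms by (intro measure_pmf.integrable_const_bound[where B = 1]) auto
  moreover have "f x \<le> 1" "-1 \<le> f x" for x
    using assms[of x] by linarith+
  ultimately have "measure_pmf.expectation p f \<le> 1" "-1 \<le> measure_pmf.expectation p f"
    by (auto intro!: measure_pmf.integral_le_const measure_pmf.integral_ge_const AE_I2)
  then show ?thesis by linarith
qed

lemma expectation_diff_le_bl_dist:
  assumes "lip1 f"
  shows "measure_pmf.expectation \<nu> f - measure_pmf.expectation \<mu> f \<le> bl_dist \<nu> \<mu>"
  unfolding bl_dist_def
proof (rule cSUP_upper)
  show "bdd_above ((\<lambda>f. measure_pmf.expectation \<nu> f - measure_pmf.expectation \<mu> f) ` {f. lip1 f})"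
  proof (rule bdd_aboveI[where M = 2], clarsimp)
    fix g assume "lip1 g"
    then have "\<bar>measure_pmf.expectation p g\<bar> \<le> 1" for p :: "zbar pmf"
      unfolding lip1_def by (intro abs_expectation_le_1) simp
    from this[of \<nu>] this[of \<mu>]
    show "measure_pmf.expectation \<nu> g - measure_pmf.expectation \<mu> g \<le> 2" by linarith
  qed
qed (use assms in simp)

lemma separated_prob_diff_le_bl_dist:
  assumes "separated c S" "0 \<le> c" "c \<le> 1"
  shows "\<bar>measure_pmf.prob \<nu> S - measure_pmf.prob \<mu> S\<bar> * c \<le> bl_dist \<nu> \<mu>"
proof -
  define f where "f x = c * indicator S x" for x
  have "\<bar>f h - f k\<bar> \<le> zd h k" for h k
    using assms(1,2) unfolding separated_def f_def
    by (cases "h \<in> S"; cases "k \<in> S") (auto simp: zd_def abs_minus_commute)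
  then have "lip1 f" "lip1 (\<lambda>x. - f x)"
    using assms(2,3) by (auto simp: lip1_def f_def indicator_def abs_minus_commute)
  moreover have "measure_pmf.expectation p f = c * measure_pmf.prob p S" for p :: "zbar pmf"
    unfolding f_def by simp
  ultimately show ?thesis
    using expectation_diff_le_bl_dist[of f \<nu> \<mu>] expectation_diff_le_bl_dist[of "\<lambda>x. - f x" \<nu> \<mu>]
    by (auto simp: abs_if algebra_simps)
qed

lemma prob_ell:
  assumes "w \<noteq> []"
  shows "measure_pmf.prob (ell w) S = real (card {j. j < length w \<and> Fin (w ! j) \<in> S}) / real (length w)"
proof -
  have "mset w = image_mset (nth w) (mset_set {..<length w})"
    by (metis map_nth mset_map mset_upt lessThan_atLeast0)
  then have "pmf_of_multiset (mset w) = map_pmf (nth w) (pmf_of_set {..<length w})"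
    using assms by (subst map_pmf_of_set) auto
  then have "measure_pmf.prob (ell w) S = measure_pmf.prob (pmf_of_set {..<length w}) (nth w -` Fin -` S)"
    unfolding ell_def by simp
  also have "\<dots> = real (card ({..<length w} \<inter> nth w -` Fin -` S)) / real (length w)"
    using assms by (subst measure_pmf_of_set) auto
  also have "{..<length w} \<inter> nth w -` Fin -` S = {j. j < length w \<and> Fin (w ! j) \<in> S}"
    by auto
  finally show ?thesis .
qed

lemma prob_mixture:
  fixes \<mu> :: "zbar pmf" and \<mu>0 :: "int pmf"
  assumes "pmf \<mu> NInf = am" "pmf \<mu> PInf = ap" "\<And>k. pmf \<mu> (Fin k) = a0 * pmf \<mu>0 k"
  shows "measure_pmf.prob \<mu> S = (if NInf \<in> S then am else 0) + (if PInf \<in> S then ap else 0)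
           + a0 * measure_pmf.prob \<mu>0 {k. Fin k \<in> S}"
proof -
  have S_decomp: "(S \<inter> {NInf, PInf}) \<union> Fin ` {k. Fin k \<in> S} = S"
    by auto (metis image_eqI mem_Collect_eq zbar.exhaust)
  have "measure_pmf.prob \<mu> ((S \<inter> {NInf, PInf}) \<union> Fin ` {k. Fin k \<in> S})
      = measure_pmf.prob \<mu> (S \<inter> {NInf, PInf}) + measure_pmf.prob \<mu> (Fin ` {k. Fin k \<in> S})"
    by (rule measure_pmf.finite_measure_Union) auto
  then have "measure_pmf.prob \<mu> S
      = measure_pmf.prob \<mu> (S \<inter> {NInf, PInf}) + measure_pmf.prob \<mu> (Fin ` {k. Fin k \<in> S})"
    unfolding S_decomp .
  also have "measure_pmf.prob \<mu> (S \<inter> {NInf, PInf}) = (if NInf \<in> S then am else 0) + (if PInf \<in> S then ap else 0)"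
    using assms(1,2) by (subst measure_measure_pmf_finite) (auto simp: Int_insert_left)
  also have "measure_pmf.prob \<mu> (Fin ` {k. Fin k \<in> S}) = infsetsum (\<lambda>k. pmf \<mu> (Fin k)) {k. Fin k \<in> S}"
    unfolding measure_pmf_conv_infsetsum
    by (rule infsetsum_reindex_bij_betw[symmetric]) (auto simp: bij_betw_def inj_on_def)
  also have "\<dots> = infsetsum (\<lambda>k. a0 * pmf \<mu>0 k) {k. Fin k \<in> S}"
    by (simp add: assms(3))
  also have "\<dots> = a0 * measure_pmf.prob \<mu>0 {k. Fin k \<in> S}"
    unfolding measure_pmf_conv_infsetsum by (rule infsetsum_cmult_right) auto
  finally show ?thesis .
qed

lemma prob_R_mu0_interval_gt:
  fixes \<mu>0 :: "int pmf"
  assumes "\<epsilon> > 0"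
  shows "measure_pmf.prob \<mu>0 {- int (R_mu0 \<mu>0 \<epsilon>) + 1 .. int (R_mu0 \<mu>0 \<epsilon>) - 1} > 1 - \<epsilon>"
proof -
  define A where "A R = {- int R + 1 .. int R - 1}" for R :: nat
  have "incseq A" unfolding A_def incseq_def by auto
  moreover have "(\<Union>R. A R) = UNIV"
  proof safe
    fix k :: int
    have "k \<in> A (nat \<bar>k\<bar> + 1)" unfolding A_def by auto
    then show "k \<in> (\<Union>R. A R)" by blast
  qed auto
  ultimately have "(\<lambda>R. measure_pmf.prob \<mu>0 (A R)) \<longlonglongrightarrow> 1"
    using measure_pmf.finite_Lim_measure_incseq[of A \<mu>0] by simp
  from order_tendstoD(1)[OF this, of "1 - \<epsilon>"] assms
  obtain R where "measure_pmf.prob \<mu>0 (A R) > 1 - \<epsilon>"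
    by (auto simp: eventually_sequentially)
  then show ?thesis
    unfolding R_mu0_def A_def by (rule LeastI)
qed

lemma prob_outside_lt_of_R_mu0_less:
  fixes \<mu>0 :: "int pmf"
  assumes "\<epsilon> > 0" "R_mu0 \<mu>0 \<epsilon> < R" "K \<inter> {- int R + 2 .. int R - 2} = {}"
  shows "measure_pmf.prob \<mu>0 K < \<epsilon>"
proof -
  define I where "I = {- int (R_mu0 \<mu>0 \<epsilon>) + 1 .. int (R_mu0 \<mu>0 \<epsilon>) - 1}"
  have "K \<inter> I = {}" using assms(2,3) unfolding I_def by force
  then have "measure_pmf.prob \<mu>0 K + measure_pmf.prob \<mu>0 I = measure_pmf.prob \<mu>0 (K \<union> I)"
    by (simp add: measure_pmf.finite_measure_Union)
  also have "\<dots> \<le> 1" by (rule measure_pmf.prob_le_1)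
  finally show ?thesis using prob_R_mu0_interval_gt[OF assms(1), of \<mu>0] unfolding I_def by linarith
qed

lemma abs_diff_mult_less:
  fixes x a e n :: real
  assumes "n > 0" "\<bar>x / n - a\<bar> < e"
  shows "\<bar>x - a * n\<bar> < e * n"
proof -
  have "\<bar>x - a * n\<bar> = \<bar>x / n - a\<bar> * n"
    using assms(1) by (simp add: field_simps abs_mult[symmetric])
  then show ?thesis using assms by simp
qed

context
  fixes \<mu> :: "zbar pmf" and \<mu>0 :: "int pmf"
    and am a0 ap \<epsilon> :: real and R n :: nat and w :: "int list"
  assumes a0_bounds: "0 \<le> a0" "a0 \<le> 1"
    and mixture: "pmf \<mu> NInf = am" "pmf \<mu> PInf = ap" "\<And>k. pmf \<mu> (Fin k) = a0 * pmf \<mu>0 k"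
    and eps_pos: "\<epsilon> > 0"
    and R_large: "R > R_mu0 \<mu>0 \<epsilon>"
    and w_in_ball: "w \<in> Omega0_ball n \<mu> (2 powr (- real R) * \<epsilon>)"
begin

lemma length_w: "length w = n" "n \<ge> 1"
  using w_in_ball by (auto simp: Omega0_ball_def Omega0_def)

lemma R_pos: "R \<ge> 1"
  using R_large by simp

lemma prob_ell_w: "measure_pmf.prob (ell w) S = real (card {j. j < length w \<and> Fin (w ! j) \<in> S}) / real n"
  using length_w by (subst prob_ell) auto

lemma prob_ell_close:
  assumes "separated c S" "0 < c" "c \<le> 1" "2 powr (- real R) * \<epsilon> \<le> c * \<eta>"
  shows "\<bar>measure_pmf.prob (ell w) S - measure_pmf.prob \<mu> S\<bar> < \<eta>"
proof -
  have "\<bar>measure_pmf.prob (ell w) S - measure_pmf.prob \<mu> S\<bar> * c \<le> bl_dist (ell w) \<mu>"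
    using assms by (intro separated_prob_diff_le_bl_dist) auto
  also have "\<dots> < c * \<eta>"
    using w_in_ball assms(4) by (simp add: Omega0_ball_def ballP_def)
  finally show ?thesis using assms(2) by (simp add: mult.commute)
qed

lemma a0_prob_outside_lt:
  assumes "K \<inter> {- int R + 2 .. int R - 2} = {}"
  shows "a0 * measure_pmf.prob \<mu>0 K < \<epsilon>"
proof -
  have "a0 * measure_pmf.prob \<mu>0 K \<le> measure_pmf.prob \<mu>0 K"
    using a0_bounds by (intro mult_left_le_one_le) auto
  also have "\<dots> < \<epsilon>"
    by (rule prob_outside_lt_of_R_mu0_less[OF eps_pos R_large assms])
  finally show ?thesis .
qed

lemma separated_cuts:
  "separated (2 powr (- real R)) (zbar_atMost (- int R))"
  "separated (2 powr (- real R)) (zbar_atMost (int R - 1))"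
  using R_pos by (auto intro!: separated_zbar_atMost)

lemma prob_ell_close_eps:
  assumes "separated (2 powr (- real R)) S"
  shows "\<bar>measure_pmf.prob (ell w) S - measure_pmf.prob \<mu> S\<bar> < \<epsilon>"
  using assms two_powr_neg_le_1 by (intro prob_ell_close) auto

lemma Nminus_estimate: "\<bar>real (Nminus R w) - am * real n\<bar> < 2 * \<epsilon> * real n"
proof (rule abs_diff_mult_less)
  define S where "S = zbar_atMost (- int R)"
  have "measure_pmf.prob (ell w) S = real (Nminus R w) / real n"
    by (simp add: prob_ell_w Nminus_def S_def)
  moreover have "{k. Fin k \<in> S} = {..- int R}" "NInf \<in> S" "PInf \<notin> S"
    by (auto simp: S_def)
  then have "measure_pmf.prob \<mu> S = am + a0 * measure_pmf.prob \<mu>0 {..- int R}"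
    using prob_mixture[OF mixture, of S] by simp
  moreover have "0 \<le> a0 * measure_pmf.prob \<mu>0 {..- int R}" "a0 * measure_pmf.prob \<mu>0 {..- int R} < \<epsilon>"
    using a0_bounds by (auto intro: a0_prob_outside_lt)
  ultimately show "\<bar>real (Nminus R w) / real n - am\<bar> < 2 * \<epsilon>"
    using prob_ell_close_eps[OF separated_cuts(1)] unfolding S_def by linarith
qed (use length_w in simp)

lemma Nplus_estimate: "\<bar>real (Nplus R w) - ap * real n\<bar> < 2 * \<epsilon> * real n"
proof (rule abs_diff_mult_less)
  define S where "S = - zbar_atMost (int R - 1)"
  have "measure_pmf.prob (ell w) S = real (Nplus R w) / real n"
    by (simp add: prob_ell_w Nplus_def S_def not_le not_less)
  moreover have "{k. Fin k \<in> S} = {int R..}" "NInf \<notin> S" "PInf \<in> S"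
    by (auto simp: S_def)
  then have "measure_pmf.prob \<mu> S = ap + a0 * measure_pmf.prob \<mu>0 {int R..}"
    using prob_mixture[OF mixture, of S] by simp
  moreover have "0 \<le> a0 * measure_pmf.prob \<mu>0 {int R..}" "a0 * measure_pmf.prob \<mu>0 {int R..} < \<epsilon>"
    using a0_bounds by (auto intro: a0_prob_outside_lt)
  ultimately show "\<bar>real (Nplus R w) / real n - ap\<bar> < 2 * \<epsilon>"
    using prob_ell_close_eps[OF separated_Compl[OF separated_cuts(2)]] unfolding S_def by linarith
qed (use length_w in simp)

lemma Nzero_estimate: "\<bar>real (Nzero R w) - a0 * real n\<bar> < 2 * \<epsilon> * real n"
proof (rule abs_diff_mult_less)
  define S where "S = - zbar_atMost (- int R) \<inter> zbar_atMost (int R - 1)"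
  define I where "I = {- int R + 1 .. int R - 1}"
  have "{j. j < length w \<and> Fin (w ! j) \<in> S} = {j. j < length w \<and> w ! j \<in> I}"
    by (auto simp: S_def I_def)
  then have "measure_pmf.prob (ell w) S = real (Nzero R w) / real n"
    by (simp add: prob_ell_w Nzero_def I_def)
  moreover have "{k. Fin k \<in> S} = I" "NInf \<notin> S" "PInf \<notin> S"
    by (auto simp: S_def I_def)
  then have "measure_pmf.prob \<mu> S = a0 * measure_pmf.prob \<mu>0 I"
    using prob_mixture[OF mixture, of S] by simp
  moreover have "measure_pmf.prob \<mu>0 (- I) = 1 - measure_pmf.prob \<mu>0 I"
    using measure_pmf.prob_compl[of I \<mu>0] by (simp add: Compl_eq_Diff_UNIV)
  then have "a0 - a0 * measure_pmf.prob \<mu>0 I = a0 * measure_pmf.prob \<mu>0 (- I)"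
    by (simp add: right_diff_distrib)
  moreover have "0 \<le> a0 * measure_pmf.prob \<mu>0 (- I)" "a0 * measure_pmf.prob \<mu>0 (- I) < \<epsilon>"
    using a0_bounds by (auto intro: a0_prob_outside_lt simp: I_def)
  ultimately show "\<bar>real (Nzero R w) / real n - a0\<bar> < 2 * \<epsilon>"
    using prob_ell_close_eps[OF separated_Int[OF separated_Compl[OF separated_cuts(1)] separated_cuts(2)]]
    unfolding S_def by linarith
qed (use length_w in simp)

lemma Nm_estimate:
  assumes "m \<in> {- int R, - int R + 1, int R - 1, int R}"
  shows "real (Nm m w) < 3 * \<epsilon> * real n"
proof -
  have "\<bar>m\<bar> \<le> int R"
    using assms R_pos by auto
  then have sep: "separated (2 powr (- real (R + 1))) {Fin m}"
    by (intro separated_singleton) (simp_all add: abs_le_iff)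
  have "2 powr (- real R) * \<epsilon> = 2 powr (- real (R + 1)) * (2 * \<epsilon>)"
    by (simp add: powr_diff powr_minus field_simps)
  then have "\<bar>measure_pmf.prob (ell w) {Fin m} - measure_pmf.prob \<mu> {Fin m}\<bar> < 2 * \<epsilon>"
    by (intro prob_ell_close[OF sep _ two_powr_neg_le_1]) auto
  moreover have "measure_pmf.prob (ell w) {Fin m} = real (Nm m w) / real n"
    by (simp add: prob_ell_w Nm_def)
  moreover have "measure_pmf.prob \<mu> {Fin m} = a0 * measure_pmf.prob \<mu>0 {m}"
    by (simp add: prob_mixture[OF mixture])
  moreover have "a0 * measure_pmf.prob \<mu>0 {m} < \<epsilon>"
    using assms by (intro a0_prob_outside_lt) auto
  ultimately have "real (Nm m w) / real n < 3 * \<epsilon>"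
    by linarith
  then show ?thesis
    using length_w by (simp add: field_simps)
qed

end

theorem lemma2p3:
  fixes \<mu> :: "zbar pmf" and \<mu>0 :: "int pmf"
    and am a0 ap \<epsilon> :: real and R n :: nat and w :: "int list"
  assumes "am \<ge> 0" and "a0 \<ge> 0" and "ap \<ge> 0" and "am + a0 + ap = 1"
    and "pmf \<mu> NInf = am" and "pmf \<mu> PInf = ap"
    and "\<forall>k. pmf \<mu> (Fin k) = a0 * pmf \<mu>0 k"
    and "\<epsilon> > 0"
    and "R > R_mu0 \<mu>0 \<epsilon>"
    and "w \<in> Omega0_ball n \<mu> (2 powr (- real R) * \<epsilon>)"
  shows "\<bar>real (Nminus R w) - am * real n\<bar> < 2 * \<epsilon> * real n
       \<and> \<bar>real (Nzero R w) - a0 * real n\<bar> < 2 * \<epsilon> * real n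
       \<and> \<bar>real (Nplus R w) - ap * real n\<bar> < 2 * \<epsilon> * real n
       \<and> (\<forall>m \<in> {- int R, - int R + 1, int R - 1, int R}. real (Nm m w) < 3 * \<epsilon> * real n)"
proof -
  have "a0 \<le> 1"
    using assms(1-4) by linarith
  note estimates = Nminus_estimate Nzero_estimate Nplus_estimate Nm_estimate
  show ?thesis
    using estimates[OF assms(2) \<open>a0 \<le> 1\<close> assms(5,6) assms(7)[rule_format] assms(8-10)] by blast
qed

end
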